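(* In the setting below, let $p,q\in X$ with $S_p\cup S_q=E$ and $|S_p\cap S_q|=n-1$, and let $r\in X$ with $S_r\ne S_p$, $S_r\ne S_q$ and $|S_r|\ge 2$. Then either $S_r\subseteq S_p\cap S_q$ or $S_r=(S_p\setminus S_q)\cup(S_q\setminus S_p)$.
   Context: Setting: $E=\{e_0,\dots,e_n\}\subset\mathbb R^n$ is the vertex set of an $n$-simplex with $e_0+\cdots+e_n=0$, and $X\subset\mathbb R^n\setminus\{0\}$ is a finite set with $E\subseteq X$, no element of $X$ a positive multiple of another, such that every $n+1$ points of $X$ are in good position. (A finite set $A$ is in conical position if $0\notin\operatorname{conv}A$ and no point of $A$ lies in the positive hull—set of nonnegative linear combinations—of the other points; it is in good position otherwise.) For $p\in X$, the support $S_p$ is the minimal subset of $E$ whose positive hull contains $p$. *)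

theory Defs
  imports "HOL-Analysis.Analysis"
begin

definition pos_hull :: "'a::real_vector set \<Rightarrow> 'a set" where
  "pos_hull A = {y. \<exists>c. (\<forall>a\<in>A. 0 \<le> c a) \<and> y = (\<Sum>a\<in>A. c a *\<^sub>R a)}"

definition conical_position :: "'a::real_vector set \<Rightarrow> bool" where
  "conical_position A \<longleftrightarrow> 0 \<notin> convex hull A \<and> (\<forall>a\<in>A. a \<notin> pos_hull (A - {a}))"

definition good_position :: "'a::real_vector set \<Rightarrow> bool" where
  "good_position A \<longleftrightarrow> \<not> conical_position A"

definition support :: "'a::real_vector set \<Rightarrow> 'a \<Rightarrow> 'a set" where
  "support E p = (THE S. S \<subseteq> E \<and> p \<in> pos_hull S \<and> (\<forall>T. T \<subset> S \<longrightarrow> p \<notin> pos_hull T))"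

end

(* Every v is uniquely a nonnegative combination of the vertices with some coefficient 0
   (because the vertices sum to 0); the support of v is where this coordinate vector is positive.
   Replacing one or two vertices of E by points of X yields an (n+1)-set whose linear relations
   form a line, spanned by a vector computed from coordinates; when that vector has two positive
   and two negative entries the set is in conical position, which X forbids.
   With S_p = E - {a} and S_q = E - {b}, such exchanges first show that the coordinates of p agree
   on E - {a, b} and are smaller there than at b. If S_r then contained a and some h outside
   {a, b} while missing some g outside {a, b}, exchanging a and g for p and r would be conical. *)

theory Submission
  imports Defs
begin

lemma relation_vanishes_if_multiple:
  fixes \<nu> \<mu> :: "'a \<Rightarrow> real"
  assumes "\<forall>x\<in>A. \<nu> x = t * \<mu> x"
    and "x \<in> A" "0 < \<mu> x" "0 \<le> \<nu> x" and "y \<in> A" "\<mu> y < 0" "0 \<le> \<nu> y"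
    and "z \<in> A"
  shows "\<nu> z = 0"
proof -
  have "0 \<le> t * \<mu> x" "0 \<le> t * \<mu> y" using assms(1,2,4,5,7) by simp_all
  then have "0 \<le> t" "t \<le> 0"
    using assms(3,6) by (simp_all add: zero_le_mult_iff)
  then show ?thesis using assms(1,8) by simp
qed

text \<open>\<open>0 \<in> convex hull A\<close> gives a relation with all coefficients \<open>\<ge> 0\<close>, and
  \<open>a \<in> pos_hull (A - {a})\<close> one whose only negative coefficient is at \<open>a\<close>; neither can be a multiple of \<open>\<mu>\<close>.\<close>

lemma conical_position_if_relations_multiple:
  fixes A :: "'a::real_vector set"
  assumes fin: "finite A"
    and relations: "\<And>\<nu>. (\<Sum>x\<in>A. \<nu> x *\<^sub>R x) = 0 \<Longrightarrow> \<exists>t. \<forall>x\<in>A. \<nu> x = t * \<mu> x"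
    and pos: "x1 \<in> A" "x2 \<in> A" "x1 \<noteq> x2" "0 < \<mu> x1" "0 < \<mu> x2"
    and neg: "y1 \<in> A" "y2 \<in> A" "y1 \<noteq> y2" "\<mu> y1 < 0" "\<mu> y2 < 0"
  shows "conical_position A"
  unfolding conical_position_def
proof (intro conjI ballI notI)
  assume "0 \<in> convex hull A"
  then obtain u where u: "\<forall>x\<in>A. 0 \<le> u x" "sum u A = 1" "(\<Sum>x\<in>A. u x *\<^sub>R x) = 0"
    using convex_hull_finite[OF fin] by auto
  obtain t where "\<forall>x\<in>A. u x = t * \<mu> x" using relations u(3) by blast
  then have "\<forall>z\<in>A. u z = 0"
    using relation_vanishes_if_multiple[of A u t \<mu> x1 y1] pos neg u(1) by blast
  then show False using u(2) by simp
next
  fix a assume a: "a \<in> A" "a \<in> pos_hull (A - {a})"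
  then obtain d where d: "\<forall>x\<in>A-{a}. 0 \<le> d x" "a = (\<Sum>x\<in>A-{a}. d x *\<^sub>R x)"
    by (auto simp: pos_hull_def)
  define \<nu> where "\<nu> = d(a := -1)"
  have "(\<Sum>x\<in>A. \<nu> x *\<^sub>R x) = (\<Sum>x\<in>A-{a}. d x *\<^sub>R x) - a"
    using fin a(1) by (simp add: \<nu>_def sum.remove)
  then obtain t where t: "\<forall>x\<in>A. \<nu> x = t * \<mu> x" using relations d(2) by auto
  obtain x where x: "x \<in> A" "x \<noteq> a" "0 < \<mu> x" using pos by metis
  obtain y where y: "y \<in> A" "y \<noteq> a" "\<mu> y < 0" using neg by metis
  have "\<nu> a = 0"
    by (rule relation_vanishes_if_multiple[OF t x(1,3) _ y(1,3) _ a(1)])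
       (use d(1) x y in \<open>auto simp: \<nu>_def\<close>)
  then show False by (simp add: \<nu>_def)
qed

locale centred_simplex =
  fixes E :: "'a::real_vector set"
  assumes finite_E: "finite E"
    and spanning: "\<And>v. \<exists>c. v = (\<Sum>e\<in>E. c e *\<^sub>R e)"
    and relation_constant:
      "\<And>c e e'. (\<Sum>e\<in>E. c e *\<^sub>R e) = 0 \<Longrightarrow> e \<in> E \<Longrightarrow> e' \<in> E \<Longrightarrow> c e = c e'"
    and sum_E: "(\<Sum>e\<in>E. e) = 0"
    and two_le_card_E: "2 \<le> card E"
begin

text \<open>Since \<open>\<Sum>E = 0\<close>, any representation of \<open>v\<close> may be shifted by a constant; \<open>coord v\<close> is the
  shift whose minimum is \<open>0\<close>, i.e. the unique nonnegative representation with a vanishing entry.\<close>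

definition rep :: "'a \<Rightarrow> 'a \<Rightarrow> real" where
  "rep v = (SOME c. v = (\<Sum>e\<in>E. c e *\<^sub>R e))"

definition coord :: "'a \<Rightarrow> 'a \<Rightarrow> real" where
  "coord v e = rep v e - Min (rep v ` E)"

lemma E_nonempty: "E \<noteq> {}"
  using two_le_card_E by auto

lemma sum_coord: "(\<Sum>e\<in>E. coord v e *\<^sub>R e) = v"
proof -
  have "(\<Sum>e\<in>E. coord v e *\<^sub>R e) = (\<Sum>e\<in>E. rep v e *\<^sub>R e) - Min (rep v ` E) *\<^sub>R (\<Sum>e\<in>E. e)"
    by (simp add: coord_def scaleR_diff_left sum_subtractf scaleR_sum_right)
  also have "(\<Sum>e\<in>E. rep v e *\<^sub>R e) = v"
    unfolding rep_def by (rule someI_ex[OF spanning, symmetric])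
  finally show ?thesis by (simp add: sum_E)
qed

lemma coord_nonneg: "e \<in> E \<Longrightarrow> 0 \<le> coord v e"
  by (simp add: coord_def finite_E)

lemma coord_vanishes_somewhere: "\<exists>e\<in>E. coord v e = 0"
proof -
  have "Min (rep v ` E) \<in> rep v ` E" using finite_E E_nonempty by simp
  then show ?thesis by (auto simp: coord_def)
qed

lemma coord_diff_eq:
  assumes "v = (\<Sum>e\<in>E. c e *\<^sub>R e)" "e \<in> E" "e' \<in> E"
  shows "coord v e - c e = coord v e' - c e'"
proof -
  have "(\<Sum>e\<in>E. (coord v e - c e) *\<^sub>R e) = 0"
    using sum_coord[of v] assms(1) by (simp add: scaleR_diff_left sum_subtractf)
  then show ?thesis using relation_constant[of "\<lambda>e. coord v e - c e"] assms(2,3) by blast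
qed

lemma coord_unique:
  assumes "v = (\<Sum>e\<in>E. c e *\<^sub>R e)" "\<forall>e\<in>E. 0 \<le> c e" "e0 \<in> E" "c e0 = 0" "e \<in> E"
  shows "coord v e = c e"
proof -
  obtain e1 where e1: "e1 \<in> E" "coord v e1 = 0" using coord_vanishes_somewhere by blast
  have "coord v e - c e = coord v e0" using coord_diff_eq assms by fastforce
  moreover have "coord v e - c e = - c e1" using coord_diff_eq[OF assms(1,5) e1(1)] e1 by simp
  moreover have "0 \<le> c e1" "0 \<le> coord v e0" using assms(2,3) e1(1) coord_nonneg by auto
  ultimately show ?thesis by linarith
qed

lemma support_coord_subset:
  assumes "T \<subseteq> E" "v \<in> pos_hull T"
  shows "{e\<in>E. 0 < coord v e} \<subseteq> T"
proof
  from assms obtain c where c: "\<forall>a\<in>T. 0 \<le> c a" "v = (\<Sum>a\<in>T. c a *\<^sub>R a)"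
    by (auto simp: pos_hull_def)
  define d where "d e = (if e \<in> T then c e else 0)" for e
  have v: "v = (\<Sum>e\<in>E. d e *\<^sub>R e)"
    unfolding c(2) using assms(1) finite_E
    by (intro sum.mono_neutral_cong_left) (auto simp: d_def)
  obtain e1 where e1: "e1 \<in> E" "coord v e1 = 0" using coord_vanishes_somewhere by blast
  fix e assume "e \<in> {e\<in>E. 0 < coord v e}"
  then have "e \<in> E" "0 < coord v e" by auto
  then have "coord v e - d e = - d e1" using coord_diff_eq[OF v _ e1(1)] e1(2) by simp
  moreover have "0 \<le> d e1" using c(1) by (simp add: d_def)
  ultimately have "0 < d e" using \<open>0 < coord v e\<close> by linarith
  then show "e \<in> T" by (simp add: d_def split: if_splits)
qed

lemma in_pos_hull_support_coord: "v \<in> pos_hull {e\<in>E. 0 < coord v e}"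
proof -
  have "(\<Sum>e\<in>{e\<in>E. 0 < coord v e}. coord v e *\<^sub>R e) = (\<Sum>e\<in>E. coord v e *\<^sub>R e)"
    using finite_E coord_nonneg[of _ v] by (intro sum.mono_neutral_left) (auto simp: less_le)
  then have "v = (\<Sum>e\<in>{e\<in>E. 0 < coord v e}. coord v e *\<^sub>R e)" by (simp add: sum_coord)
  moreover have "\<forall>e\<in>{e\<in>E. 0 < coord v e}. 0 \<le> coord v e" by simp
  ultimately show ?thesis unfolding pos_hull_def by blast
qed

lemma support_eq: "support E v = {e\<in>E. 0 < coord v e}"
proof -
  let ?S = "{e\<in>E. 0 < coord v e}"
  have minimal: "v \<notin> pos_hull T" if "T \<subset> ?S" for T
  proof
    assume "v \<in> pos_hull T"
    moreover have "T \<subseteq> E" using that by blast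
    ultimately have "?S \<subseteq> T" by (rule support_coord_subset[rotated])
    with that show False by blast
  qed
  show ?thesis
    unfolding support_def
  proof (rule the_equality)
    show "?S \<subseteq> E \<and> v \<in> pos_hull ?S \<and> (\<forall>T. T \<subset> ?S \<longrightarrow> v \<notin> pos_hull T)"
      using in_pos_hull_support_coord minimal by blast
  next
    fix S assume S: "S \<subseteq> E \<and> v \<in> pos_hull S \<and> (\<forall>T. T \<subset> S \<longrightarrow> v \<notin> pos_hull T)"
    then have "?S \<subseteq> S" using support_coord_subset by blast
    moreover have "\<not> ?S \<subset> S" using S in_pos_hull_support_coord by blast
    ultimately show "S = ?S" by blast
  qed
qed

lemma coord_zero_iff: "e \<in> E \<Longrightarrow> coord v e = 0 \<longleftrightarrow> e \<notin> support E v"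
  using coord_nonneg[of e v] by (auto simp: support_eq)

lemma support_psubset: "support E v \<subset> E"
proof -
  obtain e where "e \<in> E" "coord v e = 0" using coord_vanishes_somewhere by blast
  then have "e \<notin> {e\<in>E. 0 < coord v e}" by simp
  with \<open>e \<in> E\<close> show ?thesis unfolding support_eq by blast
qed

lemma coord_vertex:
  assumes "x \<in> E" "e \<in> E"
  shows "coord x e = (if e = x then 1 else 0)"
proof -
  have "\<not> E \<subseteq> {x}"
  proof
    assume "E \<subseteq> {x}"
    then have "card E \<le> 1" using card_mono[of "{x}" E] by simp
    with two_le_card_E show False by simp
  qed
  then obtain e0 where e0: "e0 \<in> E" "e0 \<noteq> x" by blast
  have "x = (\<Sum>e\<in>E. (if e = x then 1 else 0) *\<^sub>R e)"
    using assms finite_E by (simp add: if_distrib[of "\<lambda>c. c *\<^sub>R _"] cong: if_cong)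
  then show ?thesis by (rule coord_unique) (use assms e0 in auto)
qed

lemma support_vertex: "x \<in> E \<Longrightarrow> support E x = {x}"
  by (auto simp: support_eq coord_vertex split: if_splits)

lemma not_vertex_if_two_le_card_support: "2 \<le> card (support E v) \<Longrightarrow> v \<notin> E"
  using support_vertex by fastforce

lemma relation_coord_sum_constant:
  assumes "finite A" "(\<Sum>x\<in>A. \<nu> x *\<^sub>R x) = 0" "e \<in> E" "e' \<in> E"
  shows "(\<Sum>x\<in>A. \<nu> x * coord x e) = (\<Sum>x\<in>A. \<nu> x * coord x e')"
proof -
  have "(\<Sum>e\<in>E. (\<Sum>x\<in>A. \<nu> x * coord x e) *\<^sub>R e) = (\<Sum>e\<in>E. \<Sum>x\<in>A. \<nu> x *\<^sub>R coord x e *\<^sub>R e)"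
    by (simp add: scaleR_sum_left)
  also have "\<dots> = (\<Sum>x\<in>A. \<nu> x *\<^sub>R (\<Sum>e\<in>E. coord x e *\<^sub>R e))"
    by (subst sum.swap) (simp add: scaleR_sum_right)
  also have "\<dots> = 0" by (simp add: sum_coord assms(2))
  finally show ?thesis
    using relation_constant[of "\<lambda>e. \<Sum>x\<in>A. \<nu> x * coord x e"] assms(3,4) by blast
qed

text \<open>Vertices have indicator coordinates, so each vertex in \<open>B\<close> contributes only its own
  coefficient.\<close>

lemma relation_exchange:
  assumes "finite U" "U \<inter> E = {}" "B \<subseteq> E"
    and "(\<Sum>x\<in>U \<union> B. \<nu> x *\<^sub>R x) = 0" "e \<in> E" "e' \<in> E"
  shows "(\<Sum>x\<in>U. \<nu> x * coord x e) + (if e \<in> B then \<nu> e else 0)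
       = (\<Sum>x\<in>U. \<nu> x * coord x e') + (if e' \<in> B then \<nu> e' else 0)"
proof -
  have fin_B: "finite B" using assms(3) finite_E finite_subset by blast
  have vertices: "(\<Sum>x\<in>B. \<nu> x * coord x e) = (if e \<in> B then \<nu> e else 0)" if "e \<in> E" for e
  proof -
    have "(\<Sum>x\<in>B. \<nu> x * coord x e) = (\<Sum>x\<in>B. if x = e then \<nu> x else 0)"
      using assms(3) that by (intro sum.cong) (auto simp: coord_vertex)
    then show ?thesis using fin_B by (simp add: sum.delta')
  qed
  have disjoint: "U \<inter> B = {}" using assms(2,3) by blast
  show ?thesis
    using relation_coord_sum_constant[OF _ assms(4-6)] assms(1) fin_B disjoint
    by (simp add: sum.union_disjoint vertices assms(5,6))
qed

text \<open>The unique relation is \<open>u = \<Sum>\<^sub>e\<^sub>\<noteq>\<^sub>x (coord u e - coord u x) e\<close>, obtained by subtracting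
  \<open>coord u x \<Sum>E = 0\<close> from the coordinate representation of \<open>u\<close>.\<close>

lemma conical_exchange_one:
  assumes u: "u \<notin> E" and x: "x \<in> E"
    and e0: "e0 \<in> E" "coord u e0 < coord u x"
    and e12: "e1 \<in> E" "e2 \<in> E" "e1 \<noteq> e2" "coord u x < coord u e1" "coord u x < coord u e2"
  shows "conical_position (insert u (E - {x}))"
proof (rule conical_position_if_relations_multiple)
  let ?\<mu> = "(\<lambda>y. coord u x - coord u y)(u := 1)"
  show "finite (insert u (E - {x}))" using finite_E by simp
  show "u \<in> insert u (E - {x})" "e0 \<in> insert u (E - {x})" "u \<noteq> e0" "0 < ?\<mu> u" "0 < ?\<mu> e0"
    using u e0 by auto
  show "e1 \<in> insert u (E - {x})" "e2 \<in> insert u (E - {x})" "e1 \<noteq> e2" "?\<mu> e1 < 0" "?\<mu> e2 < 0"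
    using u e12 by auto
  fix \<nu> assume rel: "(\<Sum>y\<in>insert u (E - {x}). \<nu> y *\<^sub>R y) = 0"
  have "\<nu> e = \<nu> u * ?\<mu> e" if "e \<in> E - {x}" for e
    using relation_exchange[of "{u}" "E - {x}" \<nu> e x] rel u x that by (simp add: algebra_simps)
  then show "\<exists>t. \<forall>y\<in>insert u (E - {x}). \<nu> y = t * ?\<mu> y" by auto
qed

text \<open>Here \<open>coord w a1 \<cdot> u + coord u a2 \<cdot> w\<close> has equal coordinates \<open>\<kappa> = coord u a2 \<cdot> coord w a1\<close>
  at \<open>a1\<close> and \<open>a2\<close>; subtracting \<open>\<kappa> \<Sum>E = 0\<close> gives the unique relation.\<close>

lemma conical_exchange_two:
  assumes uw: "u \<notin> E" "w \<notin> E" "u \<noteq> w" and a12: "a1 \<in> E" "a2 \<in> E" "a1 \<noteq> a2"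
    and cu: "coord u a1 = 0" "0 < coord u a2" and cw: "0 < coord w a1" "coord w a2 = 0"
    and e12: "e1 \<in> E - {a1, a2}" "e2 \<in> E - {a1, a2}" "e1 \<noteq> e2"
    and above: "coord u a2 * coord w a1 < coord u e1 * coord w a1 + coord w e1 * coord u a2"
      "coord u a2 * coord w a1 < coord u e2 * coord w a1 + coord w e2 * coord u a2"
  shows "conical_position (insert u (insert w (E - {a1, a2})))"
proof (rule conical_position_if_relations_multiple)
  let ?A = "insert u (insert w (E - {a1, a2}))"
  let ?\<mu> = "(\<lambda>e. coord u a2 * coord w a1 - coord u e * coord w a1 - coord w e * coord u a2)
    (u := coord w a1, w := coord u a2)"
  show "finite ?A" using finite_E by simp
  show "u \<in> ?A" "w \<in> ?A" "u \<noteq> w" "0 < ?\<mu> u" "0 < ?\<mu> w" using uw cu cw by auto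
  show "e1 \<in> ?A" "e2 \<in> ?A" "e1 \<noteq> e2" "?\<mu> e1 < 0" "?\<mu> e2 < 0" using uw e12 above by auto
  fix \<nu> assume rel: "(\<Sum>x\<in>?A. \<nu> x *\<^sub>R x) = 0"
  have "?A = {u, w} \<union> (E - {a1, a2})" by auto
  then have exch: "\<nu> u * coord u e + \<nu> w * coord w e + (if e \<in> E - {a1, a2} then \<nu> e else 0)
      = \<nu> u * coord u e' + \<nu> w * coord w e' + (if e' \<in> E - {a1, a2} then \<nu> e' else 0)"
    if "e \<in> E" "e' \<in> E" for e e'
    using relation_exchange[of "{u, w}" "E - {a1, a2}" \<nu> e e'] rel uw that by auto
  define t where "t = \<nu> w * coord w a1 / (coord u a2 * coord w a1)"
  have tu: "\<nu> u = t * coord w a1" and tw: "\<nu> w = t * coord u a2"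
    using exch[of a1 a2] a12 cu cw by (auto simp: t_def field_simps)
  have "\<nu> e = t * ?\<mu> e" if "e \<in> E - {a1, a2}" for e
    using exch[of e a1] that a12 cu cw uw by (auto simp: tu tw algebra_simps)
  then show "\<exists>t. \<forall>x\<in>?A. \<nu> x = t * ?\<mu> x" using tu tw uw by auto
qed

lemma complement_of_vertex_if_card:
  assumes "S \<subseteq> E" "card S = card E - 1"
  obtains a where "a \<in> E" "S = E - {a}"
proof -
  have "card (E - S) = 1"
    using assms two_le_card_E finite_E finite_subset[OF assms(1)] by (simp add: card_Diff_subset)
  then obtain a where "E - S = {a}" by (rule card_1_singletonE)
  then show ?thesis using that assms(1) by blast
qed

lemma supports_complements_of_vertices:
  assumes "support E p \<union> support E q = E" "card (support E p \<inter> support E q) = card E - 2"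
  obtains a b where "a \<in> E" "b \<in> E" "a \<noteq> b" "support E p = E - {a}" "support E q = E - {b}"
proof -
  have fin: "finite (support E p)" "finite (support E q)"
    using support_psubset finite_E finite_subset by blast+
  have "card (support E p) < card E" "card (support E q) < card E"
    using support_psubset finite_E by (simp_all add: psubset_card_mono)
  moreover have "card (support E p) + card (support E q) = card E + (card E - 2)"
    using card_Un_Int[OF fin] assms by simp
  ultimately have "card (support E p) = card E - 1" "card (support E q) = card E - 1"
    using two_le_card_E by linarith+
  then obtain a b where ab: "a \<in> E" "support E p = E - {a}" "b \<in> E" "support E q = E - {b}"
    using complement_of_vertex_if_card support_psubset by (metis psubset_imp_subset)
  moreover have "a \<noteq> b" using ab assms(1) by blast
  ultimately show ?thesis using that by blast
qed

end

locale good_extension = centred_simplex E for E :: "'a::real_vector set" +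
  fixes X :: "'a set"
  assumes E_subset_X: "E \<subseteq> X"
    and not_conical: "\<And>A. A \<subseteq> X \<Longrightarrow> card A = card E \<Longrightarrow> \<not> conical_position A"
begin

lemma coord_above_unique:
  assumes "u \<in> X" "u \<notin> E" "x \<in> E" "e0 \<in> E" "coord u e0 < coord u x"
    and "e1 \<in> E" "e2 \<in> E" "coord u x < coord u e1" "coord u x < coord u e2"
  shows "e1 = e2"
proof (rule ccontr)
  assume "e1 \<noteq> e2"
  then have "conical_position (insert u (E - {x}))"
    by (rule conical_exchange_one[OF assms(2-7) _ assms(8,9)])
  moreover have "card (insert u (E - {x})) = card E"
    using assms(2,3) finite_E two_le_card_E by simp
  moreover have "insert u (E - {x}) \<subseteq> X" using assms(1) E_subset_X by blast
  ultimately show False using not_conical by blast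
qed

lemma weighted_coord_above_unique:
  assumes "u \<in> X" "w \<in> X" "u \<notin> E" "w \<notin> E" "u \<noteq> w" "a1 \<in> E" "a2 \<in> E" "a1 \<noteq> a2"
    and "coord u a1 = 0" "0 < coord u a2" "0 < coord w a1" "coord w a2 = 0"
    and "e1 \<in> E - {a1, a2}" "e2 \<in> E - {a1, a2}"
    and "coord u a2 * coord w a1 < coord u e1 * coord w a1 + coord w e1 * coord u a2"
      "coord u a2 * coord w a1 < coord u e2 * coord w a1 + coord w e2 * coord u a2"
  shows "e1 = e2"
proof (rule ccontr)
  assume "e1 \<noteq> e2"
  then have "conical_position (insert u (insert w (E - {a1, a2})))"
    by (rule conical_exchange_two[OF assms(3-14) _ assms(15,16)])
  moreover have "card (insert u (insert w (E - {a1, a2}))) = card E"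
    using assms(3-8) finite_E two_le_card_E by (simp add: card_Diff_subset)
  moreover have "insert u (insert w (E - {a1, a2})) \<subseteq> X" using assms(1,2) E_subset_X by blast
  ultimately show False using not_conical by blast
qed

text \<open>By the one-vertex exchange at most one coordinate of \<open>p\<close> exceeds its minimum \<open>m\<close> over
  \<open>E - {a}\<close>; by the exchange of \<open>a, b\<close> for \<open>p, q\<close> that one is at \<open>b\<close>.\<close>

lemma coord_off_missing_vertices:
  assumes p: "p \<in> X" "support E p = E - {a}" and q: "q \<in> X" "support E q = E - {b}"
    and ab: "a \<in> E" "b \<in> E" "a \<noteq> b"
    and gh: "g \<in> E - {a, b}" "h \<in> E - {a, b}" "g \<noteq> h"
  shows "coord p g = coord p h \<and> coord p g < coord p b"
proof -
  have "2 \<le> card (E - {c})" if "c \<in> {a, b}" for c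
  proof -
    have "card {g, h} \<le> card (E - {c})"
      using gh that finite_E by (intro card_mono) auto
    with gh show ?thesis by simp
  qed
  then have p_E: "p \<notin> E" and q_E: "q \<notin> E"
    using not_vertex_if_two_le_card_support p(2) q(2) by simp_all
  have pos_p: "0 < coord p e" if "e \<in> E - {a}" for e using p(2) that unfolding support_eq by blast
  have pos_q: "0 < coord q e" if "e \<in> E - {b}" for e using q(2) that unfolding support_eq by blast
  have pa: "coord p a = 0" and qb: "coord q b = 0"
    using coord_zero_iff[OF ab(1), of p] coord_zero_iff[OF ab(2), of q] p(2) q(2) by simp_all
  have pq: "p \<noteq> q" using pa pos_q[of a] ab by auto
  define m where "m = Min (coord p ` (E - {a}))"
  have m_le: "m \<le> coord p e" if "e \<in> E - {a}" for e
    unfolding m_def using that finite_E by (intro Min_le) auto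
  have "m \<in> coord p ` (E - {a})"
    unfolding m_def using finite_E gh by (intro Min_in) auto
  then obtain x where x: "x \<in> E - {a}" "coord p x = m" by auto
  have above: "e1 = e2" if "e1 \<in> E" "e2 \<in> E" "m < coord p e1" "m < coord p e2" for e1 e2
    using coord_above_unique[OF p(1) p_E, of x a e1 e2] x that pa pos_p[of x] ab(1) by simp
  have "m < coord p b"
  proof (rule ccontr)
    assume "\<not> m < coord p b"
    then have le: "coord p b * coord q a \<le> coord p e * coord q a" if "e \<in> {g, h}" for e
      using m_le[of e] gh that pos_q[of a] ab by (intro mult_right_mono) auto
    have pos: "0 < coord q e * coord p b" if "e \<in> {g, h}" for e
      using pos_q[of e] pos_p[of b] gh that ab by auto
    have "coord p b * coord q a < coord p e * coord q a + coord q e * coord p b"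
      if "e \<in> {g, h}" for e
      using le[OF that] pos[OF that] by linarith
    then have "g = h"
      using weighted_coord_above_unique[OF p(1) q(1) p_E q_E pq ab pa pos_p[of b] pos_q[of a] qb
          gh(1,2)] ab by simp
    with gh show False by simp
  qed
  moreover have "coord p e = m" if "e \<in> {g, h}" for e
  proof -
    have "e \<in> E - {a}" "e \<noteq> b" using gh that by auto
    then have "\<not> m < coord p e" using above[of e b] \<open>m < coord p b\<close> ab(2) by blast
    then show ?thesis using m_le[OF \<open>e \<in> E - {a}\<close>] by simp
  qed
  ultimately show ?thesis by simp
qed

lemma support_containing_missing_vertex:
  assumes p: "p \<in> X" "support E p = E - {a}" and q: "q \<in> X" "support E q = E - {b}"
    and ab: "a \<in> E" "b \<in> E" "a \<noteq> b" and r: "r \<in> X"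
    and r_a: "a \<in> support E r" and r_q: "support E r \<noteq> E - {b}" and r_2: "2 \<le> card (support E r)"
  shows "support E r = {a, b}"
proof (rule ccontr)
  assume r_ab: "support E r \<noteq> {a, b}"
  have "\<not> support E r \<subseteq> {a, b}"
  proof
    assume "support E r \<subseteq> {a, b}"
    then have "support E r = {a}" using r_a r_ab by blast
    with r_2 show False by simp
  qed
  then obtain h where h: "h \<in> support E r" "h \<noteq> a" "h \<noteq> b" by blast
  obtain g where g: "g \<in> E" "g \<notin> support E r" "g \<noteq> b"
    using support_psubset[of r] r_q by blast
  have hE: "h \<in> E" using h support_psubset by blast
  have "g \<noteq> a" "g \<noteq> h" using g h r_a by auto
  then have pg: "coord p g = coord p h \<and> coord p g < coord p b"
    using coord_off_missing_vertices[OF p q ab, of g h] g h hE by auto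
  have r_E: "r \<notin> E" and p_E: "p \<notin> E"
    using not_vertex_if_two_le_card_support r_2 p card_mono[of "E - {a}" "{g, h}"]
      finite_E g hE h \<open>g \<noteq> a\<close> \<open>g \<noteq> h\<close> by auto
  have pa: "coord p a = 0" and rg: "coord r g = 0" using coord_zero_iff p ab g by auto
  have pos: "0 < coord p g" "0 < coord r a" "0 < coord r h" "0 \<le> coord r b"
    using p g \<open>g \<noteq> a\<close> r_a h coord_nonneg ab by (auto simp: support_eq)
  have "p \<noteq> r" using pa pos(2) by auto
  moreover have "coord p g * coord r a < coord p b * coord r a + coord r b * coord p g"
    using mult_strict_right_mono[OF conjunct2[OF pg] pos(2)]
      mult_nonneg_nonneg[OF pos(4) less_imp_le[OF pos(1)]] by linarith
  moreover have "coord p g * coord r a < coord p h * coord r a + coord r h * coord p g"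
    using pg pos by simp
  ultimately have "b = h"
    using weighted_coord_above_unique[OF p(1) r p_E r_E _ ab(1) g(1) \<open>g \<noteq> a\<close>[symmetric] pa
        pos(1,2) rg, of b h] ab g h hE \<open>g \<noteq> a\<close> \<open>g \<noteq> h\<close> by auto
  with h show False by simp
qed

end

lemma centred_simplex_if_affine_independent:
  fixes E :: "'a::euclidean_space set"
  assumes card: "card E = DIM('a) + 1" and indep: "\<not> affine_dependent E"
    and sum: "(\<Sum>e\<in>E. e) = 0"
  shows "centred_simplex E"
proof
  show fin: "finite E" using card card.infinite by fastforce
  show "2 \<le> card E" using card DIM_positive[where 'a = 'a] by linarith
  show "(\<Sum>e\<in>E. e) = 0" by (rule sum)
  fix v :: 'a
  have "aff_dim E = DIM('a)" using aff_dim_affine_independent[OF indep] card by simp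
  then have "v \<in> affine hull E" using aff_dim_eq_full by auto
  then show "\<exists>c. v = (\<Sum>e\<in>E. c e *\<^sub>R e)" using affine_hull_finite[OF fin] by auto
next
  fix c :: "'a \<Rightarrow> real" and e e'
  assume rel: "(\<Sum>e\<in>E. c e *\<^sub>R e) = 0" and "e \<in> E" "e' \<in> E"
  define M where "M = sum c E / real (card E)"
  have "sum (\<lambda>x. c x - M) E = 0" using card by (simp add: M_def sum_subtractf)
  moreover have "(\<Sum>x\<in>E. (c x - M) *\<^sub>R x) = 0"
    using rel sum by (simp add: scaleR_diff_left sum_subtractf scaleR_sum_right[symmetric])
  ultimately have "\<forall>x\<in>E. c x - M = 0"
    using indep affine_dependent_explicit_finite[of E] card card.infinite by fastforce
  then show "c e = c e'" using \<open>e \<in> E\<close> \<open>e' \<in> E\<close> by simp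
qed

theorem proposition6p9:
  fixes E X :: "(real ^ 'n) set" and p q r :: "real ^ 'n"
  assumes E_card: "card E = CARD('n) + 1"
    and E_simplex: "\<not> affine_dependent E"
    and E_sum: "(\<Sum>e\<in>E. e) = 0"
    and X_fin: "finite X"
    and X_nz: "0 \<notin> X"
    and E_X: "E \<subseteq> X"
    and X_nomult: "\<forall>x\<in>X. \<forall>y\<in>X. \<forall>c::real. c > 0 \<and> x = c *\<^sub>R y \<longrightarrow> x = y"
    and X_good: "\<forall>A. A \<subseteq> X \<and> card A = CARD('n) + 1 \<longrightarrow> good_position A"
    and pq: "p \<in> X" "q \<in> X"
    and union: "support E p \<union> support E q = E"
    and inter: "card (support E p \<inter> support E q) = CARD('n) - 1"
    and r: "r \<in> X"
    and rp: "support E r \<noteq> support E p"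
    and rq: "support E r \<noteq> support E q"
    and r2: "card (support E r) \<ge> 2"
  shows "support E r \<subseteq> support E p \<inter> support E q \<or>
         support E r = (support E p - support E q) \<union> (support E q - support E p)"
proof -
  interpret good_extension E X
  proof (rule good_extension.intro)
    show "centred_simplex E"
      by (rule centred_simplex_if_affine_independent) (use E_card E_simplex E_sum in simp_all)
    show "good_extension_axioms E X"
      using E_X X_good E_card by unfold_locales (auto simp: good_position_def)
  qed
  have "card (support E p \<inter> support E q) = card E - 2" using inter E_card by simp
  then obtain a b where ab: "a \<in> E" "b \<in> E" "a \<noteq> b"
    and p: "support E p = E - {a}" and q: "support E q = E - {b}"
    by (rule supports_complements_of_vertices[OF union])
  have common: "support E p \<inter> support E q = E - {a, b}"
    and symdiff: "(support E p - support E q) \<union> (support E q - support E p) = {a, b}"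
    using p q ab by auto
  consider "a \<in> support E r" | "b \<in> support E r" | "support E r \<subseteq> E - {a, b}"
    using support_psubset[of r] by blast
  then show ?thesis
  proof cases
    case 1
    then show ?thesis
      using support_containing_missing_vertex[OF pq(1) p pq(2) q ab r] rq q r2 symdiff by simp
  next
    case 2
    then have "support E r = {b, a}"
      using support_containing_missing_vertex[OF pq(2) q pq(1) p ab(2,1) ab(3)[symmetric] r] rp p r2
      by simp
    then show ?thesis using symdiff by (simp add: insert_commute)
  next
    case 3
    then show ?thesis using common by simp
  qed
qed

end
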